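(* For $\beta>0$, $N\in\mathbb{N}$ and $k,s\in\mathbb{R}_+$, \[ \mathsf{M}^{(\beta)}_N(k;s)=\mathbb{E}_{\mathrm{C}\beta\mathrm{E}_N}\left[\left|\mathsf{X}_N(1)\right|^{2ks}\right] \mathbb{E}\left[\left(\frac{1}{2\pi}\int_{-\pi}^\pi \left|\mathfrak{q}_N^{\beta,ks}(\mathrm{e}^{\mathrm{i}\theta})\right|^{2s}\mathrm{d}\theta\right)^{k-1}\right]. \]
   Context: $\mathbb{R}_+=[0,\infty)$. C$\beta$E$_N$ is the probability measure on $[-\pi,\pi)^N$ with density proportional to $\prod_{1\le j<k\le N}|\mathrm{e}^{\mathrm{i}\theta_j}-\mathrm{e}^{\mathrm{i}\theta_k}|^\beta$; $\mathsf{X}_N(z)=\prod_{j=1}^N(1-z\mathrm{e}^{-\mathrm{i}\theta_j})$ with $(\theta_j)$ C$\beta$E$_N$-distributed; $\mathsf{M}^{(\beta)}_N(k;s)=\mathbb{E}_{\mathrm{C}\beta\mathrm{E}_N}\big[\big(\frac{1}{2\pi}\int_{-\pi}^{\pi}|\mathsf{X}_N(\mathrm{e}^{\mathrm{i}\theta})|^{2s}\mathrm{d}\theta\big)^k\big]$. For $\delta\ge 0$, $\mathcal{CJ}_{N,\beta,\delta}$ is the probability measure on $[-\pi,\pi)^N$ with density proportional to $\prod_{j<k}|\mathrm{e}^{\mathrm{i}\theta_j}-\mathrm{e}^{\mathrm{i}\theta_k}|^\beta\prod_{j}|1-\mathrm{e}^{\mathrm{i}\theta_j}|^{2\delta}$,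 and $\mathfrak{q}_N^{\beta,\delta}(z)=\prod_{j=1}^N\frac{z-\mathrm{e}^{\mathrm{i}\theta_j}}{1-\mathrm{e}^{\mathrm{i}\theta_j}}$ with $(\theta_j)\sim\mathcal{CJ}_{N,\beta,\delta}$. *)

theory Defs
  imports "HOL-Probability.Probability"
begin

text \<open>Points of the ensembles: \<theta> :: nat \<Rightarrow> real, only coordinates j < N matter.
  The reference measure is Lebesgue measure on [-pi,pi)^N.\<close>

definition box_space :: "nat \<Rightarrow> (nat \<Rightarrow> real) measure" where
  "box_space N = PiM {..<N} (\<lambda>_. restrict_space lborel {-pi..<pi})"

definition ens_expect :: "nat \<Rightarrow> ((nat \<Rightarrow> real) \<Rightarrow> real) \<Rightarrow> ((nat \<Rightarrow> real) \<Rightarrow> real) \<Rightarrow> ennreal" where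
  "ens_expect N w f =
     (\<integral>\<^sup>+ \<theta>. ennreal (f \<theta>) * ennreal (w \<theta>) \<partial>box_space N) / (\<integral>\<^sup>+ \<theta>. ennreal (w \<theta>) \<partial>box_space N)"

definition cbe_weight :: "real \<Rightarrow> nat \<Rightarrow> (nat \<Rightarrow> real) \<Rightarrow> real" where
  "cbe_weight \<beta> N \<theta> =
     (\<Prod>p\<in>{(j,k). j < k \<and> k < N}. cmod (cis (\<theta> (fst p)) - cis (\<theta> (snd p))) powr \<beta>)"

definition cj_weight :: "real \<Rightarrow> real \<Rightarrow> nat \<Rightarrow> (nat \<Rightarrow> real) \<Rightarrow> real" where
  "cj_weight \<beta> \<delta> N \<theta> = cbe_weight \<beta> N \<theta> * (\<Prod>j<N. cmod (1 - cis (\<theta> j)) powr (2 * \<delta>))"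

definition charpoly_X :: "nat \<Rightarrow> (nat \<Rightarrow> real) \<Rightarrow> complex \<Rightarrow> complex" where
  "charpoly_X N \<theta> z = (\<Prod>j<N. 1 - z * cis (- \<theta> j))"

definition q_poly :: "nat \<Rightarrow> (nat \<Rightarrow> real) \<Rightarrow> complex \<Rightarrow> complex" where
  "q_poly N \<theta> z = (\<Prod>j<N. (z - cis (\<theta> j)) / (1 - cis (\<theta> j)))"

definition moments_M :: "real \<Rightarrow> nat \<Rightarrow> real \<Rightarrow> real \<Rightarrow> ennreal" where
  "moments_M \<beta> N k s = ens_expect N (cbe_weight \<beta> N)
     (\<lambda>\<theta>. (1 / (2 * pi) * (LBINT t=-pi..pi. cmod (charpoly_X N \<theta> (cis t)) powr (2 * s))) powr k)"

end

theory Submission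
  imports Defs
begin

text \<open>Rotating all eigenangles by a common angle c preserves the C\<beta>E weight and turns
  X_N(e^{iu}) into X_N(e^{i(u-c)}), so the circle average I = (1/2\<pi>) \<integral> |X_N(e^{it})|^{2s} dt
  is rotation invariant. Writing I^k = I I^{k-1}, Fubini and the rotation by u, which moves e^{iu}
  to 1, give E[I^k] = E[|X_N(1)|^{2s} I^{k-1}]. Since |X_N(z)| = |X_N(1)| |q_N(z)|, this equals
  E[|X_N(1)|^{2ks} J^{k-1}] with J the circle average of |q_N|^{2s}, and absorbing |X_N(1)|^{2ks}
  into the C\<beta>E density gives the circular Jacobi ensemble with \<delta> = ks.\<close>

section \<open>Rotations of the circle\<close>

definition circle_space :: "real measure" where
  "circle_space = restrict_space lborel {-pi..<pi}"

lemma box_space_eq_PiM_circle: "box_space N = PiM {..<N} (\<lambda>_. circle_space)"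
  unfolding box_space_def circle_space_def ..

lemma space_circle_space [simp]: "space circle_space = {-pi..<pi}"
  by (simp add: circle_space_def)

lemma sets_circle_space: "A \<in> sets circle_space \<longleftrightarrow> A \<in> sets borel \<and> A \<subseteq> {-pi..<pi}"
  by (auto simp: circle_space_def sets_restrict_space_iff)

lemma emeasure_circle_space: "emeasure circle_space {-pi..<pi} = ennreal (2 * pi)"
  by (simp add: circle_space_def emeasure_restrict_space)

lemma measurable_ident_circle_space: "(\<lambda>x. x) \<in> circle_space \<rightarrow>\<^sub>M borel"
  unfolding circle_space_def by (rule measurable_restrict_space1) simp

interpretation circle_space: finite_measure circle_space
  by (rule finite_measureI) (simp add: emeasure_circle_space)

interpretation circle_product: product_sigma_finite "\<lambda>_::nat. circle_space"
  by (simp add: product_sigma_finite_def circle_space.sigma_finite_measure_axioms)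

definition wrap_angle :: "real \<Rightarrow> real" where
  "wrap_angle y = y - 2 * pi * of_int \<lfloor>(y + pi) / (2 * pi)\<rfloor>"

lemma borel_measurable_wrap_angle [measurable]: "wrap_angle \<in> borel_measurable borel"
  unfolding wrap_angle_def by measurable

lemma wrap_angle_bounds [simp]: "-pi \<le> wrap_angle y" "wrap_angle y < pi"
proof -
  let ?z = "(y + pi) / (2 * pi)"
  have "2 * pi * of_int \<lfloor>?z\<rfloor> \<le> 2 * pi * ?z" "2 * pi * ?z < 2 * pi * (of_int \<lfloor>?z\<rfloor> + 1)"
    by (simp_all del: times_divide_eq_right)
  moreover have "2 * pi * ?z = y + pi" by simp
  ultimately show "-pi \<le> wrap_angle y" "wrap_angle y < pi"
    unfolding wrap_angle_def by (auto simp: algebra_simps)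
qed

lemma wrap_angle_eq_self: "-pi \<le> y \<Longrightarrow> y < pi \<Longrightarrow> wrap_angle y = y"
  by (simp add: wrap_angle_def floor_eq_iff field_simps)

lemma wrap_angle_add_period: "wrap_angle (y + 2 * pi * of_int m) = wrap_angle y"
proof -
  have "(y + 2 * pi * of_int m + pi) / (2 * pi) = (y + pi) / (2 * pi) + of_int m"
    by (simp add: field_simps)
  then show ?thesis by (simp add: wrap_angle_def algebra_simps)
qed

lemma cis_wrap_angle: "cis (wrap_angle y) = cis y"
proof -
  have "cis (wrap_angle y) = cis y / cis (2 * pi * of_int \<lfloor>(y + pi) / (2 * pi)\<rfloor>)"
    unfolding wrap_angle_def by (rule cis_divide[symmetric])
  also have "cis (2 * pi * of_int \<lfloor>(y + pi) / (2 * pi)\<rfloor>) = 1"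
    by (rule cis_multiple_2pi) simp
  finally show ?thesis by simp
qed

lemma nn_integral_lborel_translate:
  fixes f :: "real \<Rightarrow> ennreal"
  assumes "f \<in> borel_measurable borel"
  shows "(\<integral>\<^sup>+x. f (x + c) \<partial>lborel) = (\<integral>\<^sup>+x. f x \<partial>lborel)"
  using nn_integral_real_affine[OF assms, of 1 c] by (simp add: add.commute)

text \<open>Both windows contain [b, a + 2\<pi>); the remaining pieces [a, b) and [a + 2\<pi>, b + 2\<pi>)
  differ by a period.\<close>

lemma nn_integral_periodic_interval_shift:
  fixes g :: "real \<Rightarrow> ennreal"
  assumes [measurable]: "g \<in> borel_measurable borel"
    and periodic: "\<And>x. g (x + 2 * pi) = g x" and "a \<le> b" "b \<le> a + 2 * pi"
  shows "(\<integral>\<^sup>+x. g x * indicator {a..<a + 2 * pi} x \<partial>lborel) =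
    (\<integral>\<^sup>+x. g x * indicator {b..<b + 2 * pi} x \<partial>lborel)"
proof -
  have "(\<integral>\<^sup>+x. g x * indicator {a + 2 * pi..<b + 2 * pi} x \<partial>lborel) =
      (\<integral>\<^sup>+x. g (x + 2 * pi) * indicator {a + 2 * pi..<b + 2 * pi} (x + 2 * pi) \<partial>lborel)"
    by (rule nn_integral_lborel_translate[symmetric]) simp
  also have "\<dots> = (\<integral>\<^sup>+x. g x * indicator {a..<b} x \<partial>lborel)"
    using periodic by (intro nn_integral_cong) (simp add: indicator_def)
  finally have shifted_piece: "(\<integral>\<^sup>+x. g x * indicator {a + 2 * pi..<b + 2 * pi} x \<partial>lborel) =
      (\<integral>\<^sup>+x. g x * indicator {a..<b} x \<partial>lborel)" .
  have interval_split: "(\<integral>\<^sup>+x. g x * indicator {p..<r} x \<partial>lborel) =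
      (\<integral>\<^sup>+x. g x * indicator {p..<q} x \<partial>lborel) + (\<integral>\<^sup>+x. g x * indicator {q..<r} x \<partial>lborel)"
    if "p \<le> q" "q \<le> r" for p q r
  proof -
    have "(\<integral>\<^sup>+x. g x * indicator {p..<r} x \<partial>lborel) =
        (\<integral>\<^sup>+x. g x * indicator {p..<q} x + g x * indicator {q..<r} x \<partial>lborel)"
      using that by (intro nn_integral_cong) (auto simp: indicator_def)
    also have "\<dots> = (\<integral>\<^sup>+x. g x * indicator {p..<q} x \<partial>lborel) +
        (\<integral>\<^sup>+x. g x * indicator {q..<r} x \<partial>lborel)"
      by (rule nn_integral_add) auto
    finally show ?thesis .
  qed
  show ?thesis
    using interval_split[of a b "a + 2 * pi"] interval_split[of b "a + 2 * pi" "b + 2 * pi"]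
      shifted_piece assms(3,4)
    by (simp add: add.commute)
qed

lemma nn_integral_periodic_shift:
  fixes g :: "real \<Rightarrow> ennreal"
  assumes [measurable]: "g \<in> borel_measurable borel"
    and periodic: "\<And>x. g (x + 2 * pi) = g x" and "\<bar>c\<bar> \<le> 2 * pi"
  shows "(\<integral>\<^sup>+x. g (x + c) * indicator {-pi..<pi} x \<partial>lborel) =
    (\<integral>\<^sup>+x. g x * indicator {-pi..<pi} x \<partial>lborel)"
proof -
  have "(\<integral>\<^sup>+x. g (x + c) * indicator {-pi..<pi} x \<partial>lborel) =
      (\<integral>\<^sup>+x. g (x + c) * indicator {c - pi..<c - pi + 2 * pi} (x + c) \<partial>lborel)"
    by (intro nn_integral_cong) (simp add: indicator_def)
  also have "\<dots> = (\<integral>\<^sup>+x. g x * indicator {c - pi..<c - pi + 2 * pi} x \<partial>lborel)"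
    by (rule nn_integral_lborel_translate) simp
  also have "\<dots> = (\<integral>\<^sup>+x. g x * indicator {-pi..<-pi + 2 * pi} x \<partial>lborel)"
  proof (cases "c \<ge> 0")
    case True
    then show ?thesis
      using assms by (intro nn_integral_periodic_interval_shift[symmetric]) auto
  next
    case False
    then show ?thesis
      using assms by (intro nn_integral_periodic_interval_shift) auto
  qed
  finally show ?thesis by simp
qed

definition rotate_angle :: "real \<Rightarrow> real \<Rightarrow> real" where
  "rotate_angle c x = wrap_angle (x + c)"

lemma cis_rotate_angle: "cis (rotate_angle c x) = cis (x + c)"
  by (simp add: rotate_angle_def cis_wrap_angle)

lemma measurable_rotate_angle [measurable]: "rotate_angle c \<in> circle_space \<rightarrow>\<^sub>M circle_space"
  unfolding circle_space_def rotate_angle_def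
  by (rule measurable_restrict_space3) (auto simp: Pi_iff)

lemma rotate_angle_wrap_angle: "rotate_angle (wrap_angle c) = rotate_angle c"
proof
  fix x
  have "x + wrap_angle c = x + c + 2 * pi * of_int (- \<lfloor>(c + pi) / (2 * pi)\<rfloor>)"
    by (simp add: wrap_angle_def)
  then show "rotate_angle (wrap_angle c) x = rotate_angle c x"
    by (simp only: rotate_angle_def wrap_angle_add_period)
qed

lemma nn_integral_circle_rotate_angle:
  assumes [measurable]: "f \<in> borel_measurable circle_space"
  shows "(\<integral>\<^sup>+x. f (rotate_angle c x) \<partial>circle_space) = (\<integral>\<^sup>+x. f x \<partial>circle_space)"
proof -
  have [measurable]: "wrap_angle \<in> borel \<rightarrow>\<^sub>M circle_space"
    unfolding circle_space_def
    by (rule measurable_restrict_space2) simp_all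
  define g where "g y = f (wrap_angle y)" for y
  have [measurable]: "g \<in> borel_measurable borel"
    unfolding g_def by measurable
  have "g (x + 2 * pi) = g x" for x
    using wrap_angle_add_period[of x 1] by (simp add: g_def)
  moreover have "\<bar>wrap_angle c\<bar> \<le> 2 * pi"
    using wrap_angle_bounds[of c] by linarith
  ultimately have shift: "(\<integral>\<^sup>+x. g (x + wrap_angle c) * indicator {-pi..<pi} x \<partial>lborel) =
      (\<integral>\<^sup>+x. g x * indicator {-pi..<pi} x \<partial>lborel)"
    by (intro nn_integral_periodic_shift) auto
  have "(\<integral>\<^sup>+x. f (rotate_angle c x) \<partial>circle_space) =
      (\<integral>\<^sup>+x. g (x + wrap_angle c) * indicator {-pi..<pi} x \<partial>lborel)"
    unfolding circle_space_def
    by (subst rotate_angle_wrap_angle[symmetric], subst nn_integral_restrict_space)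
      (auto simp: g_def rotate_angle_def)
  also have "\<dots> = (\<integral>\<^sup>+x. g x * indicator {-pi..<pi} x \<partial>lborel)"
    by (fact shift)
  also have "\<dots> = (\<integral>\<^sup>+x. f x \<partial>circle_space)"
    unfolding circle_space_def
    by (subst nn_integral_restrict_space)
      (auto simp: g_def wrap_angle_eq_self split: split_indicator intro!: nn_integral_cong)
  finally show ?thesis .
qed

lemma distr_circle_rotate_angle: "distr circle_space circle_space (rotate_angle c) = circle_space"
proof (rule measure_eqI)
  fix A assume "A \<in> sets (distr circle_space circle_space (rotate_angle c))"
  then have [measurable]: "A \<in> sets circle_space" by simp
  have "emeasure (distr circle_space circle_space (rotate_angle c)) A =
      (\<integral>\<^sup>+x. indicator A x \<partial>distr circle_space circle_space (rotate_angle c))"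
    by simp
  also have "\<dots> = (\<integral>\<^sup>+x. indicator A (rotate_angle c x) \<partial>circle_space)"
    by (rule nn_integral_distr) simp_all
  also have "\<dots> = emeasure circle_space A"
    by (simp add: nn_integral_circle_rotate_angle)
  finally show "emeasure (distr circle_space circle_space (rotate_angle c)) A = emeasure circle_space A" .
qed simp

definition rotate_angles :: "nat \<Rightarrow> real \<Rightarrow> (nat \<Rightarrow> real) \<Rightarrow> nat \<Rightarrow> real" where
  "rotate_angles N c \<theta> = (\<lambda>j\<in>{..<N}. rotate_angle c (\<theta> j))"

lemma measurable_rotate_angles [measurable]: "rotate_angles N c \<in> box_space N \<rightarrow>\<^sub>M box_space N"
  unfolding rotate_angles_def box_space_eq_PiM_circle by measurable

lemma distr_box_rotate_angles: "distr (box_space N) (box_space N) (rotate_angles N c) = box_space N"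
  unfolding box_space_eq_PiM_circle
proof (rule circle_product.PiM_eqI)
  fix A assume A: "\<And>i. i \<in> {..<N} \<Longrightarrow> A i \<in> sets circle_space"
  let ?B = "PiM {..<N} (\<lambda>_. circle_space)"
  have "emeasure (distr ?B ?B (rotate_angles N c)) (PiE {..<N} A) =
      emeasure ?B (rotate_angles N c -` PiE {..<N} A \<inter> space ?B)"
    using A measurable_rotate_angles[of N c]
    by (intro emeasure_distr) (auto simp: box_space_eq_PiM_circle intro: sets_PiM_I_finite)
  also have "rotate_angles N c -` PiE {..<N} A \<inter> space ?B =
      PiE {..<N} (\<lambda>i. rotate_angle c -` A i \<inter> space circle_space)"
    using A by (auto simp: space_PiM PiE_def Pi_def extensional_def rotate_angles_def
        rotate_angle_def)
  also have "emeasure ?B \<dots> = (\<Prod>i<N. emeasure circle_space (rotate_angle c -` A i \<inter> space circle_space))"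
    using A by (intro circle_product.emeasure_PiM measurable_sets[OF measurable_rotate_angle]) auto
  also have "\<dots> = (\<Prod>i<N. emeasure circle_space (A i))"
  proof (intro prod.cong refl)
    fix i assume "i \<in> {..<N}"
    then have "emeasure (distr circle_space circle_space (rotate_angle c)) (A i) =
        emeasure circle_space (rotate_angle c -` A i \<inter> space circle_space)"
      using A by (intro emeasure_distr) auto
    then show "emeasure circle_space (rotate_angle c -` A i \<inter> space circle_space) =
        emeasure circle_space (A i)"
      by (simp add: distr_circle_rotate_angle)
  qed
  finally show "emeasure (distr ?B ?B (rotate_angles N c)) (PiE {..<N} A) =
      (\<Prod>i<N. emeasure circle_space (A i))" .
qed simp_all

lemma nn_integral_box_rotate_angles:
  assumes "f \<in> borel_measurable (box_space N)"
  shows "(\<integral>\<^sup>+\<theta>. f (rotate_angles N c \<theta>) \<partial>box_space N) = (\<integral>\<^sup>+\<theta>. f \<theta> \<partial>box_space N)"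
  using nn_integral_distr[of "rotate_angles N c" "box_space N" "box_space N" f] assms
  by (simp add: distr_box_rotate_angles)

section \<open>Rotation invariance of the ensemble\<close>

lemma borel_measurable_cis [measurable]: "cis \<in> borel_measurable borel"
  by (intro borel_measurable_continuous_onI continuous_intros)

lemma measurable_angle [measurable]:
  "j \<in> {..<N} \<Longrightarrow> (\<lambda>\<theta>. \<theta> j) \<in> borel_measurable (box_space N)"
  unfolding box_space_eq_PiM_circle
  using measurable_comp[OF measurable_component_singleton[of j "{..<N}" "\<lambda>_. circle_space"]
      measurable_ident_circle_space]
  by (simp add: comp_def)

lemma borel_measurable_cbe_weight [measurable]: "cbe_weight \<beta> N \<in> borel_measurable (box_space N)"
  unfolding cbe_weight_def
proof (rule borel_measurable_prod)
  fix p :: "nat \<times> nat" assume "p \<in> {(j, k). j < k \<and> k < N}"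
  then have [measurable]: "fst p \<in> {..<N}" "snd p \<in> {..<N}" by auto
  show "(\<lambda>\<theta>. cmod (cis (\<theta> (fst p)) - cis (\<theta> (snd p))) powr \<beta>) \<in> borel_measurable (box_space N)"
    by measurable
qed

lemma borel_measurable_cj_weight [measurable]: "cj_weight \<beta> \<delta> N \<in> borel_measurable (box_space N)"
  unfolding cj_weight_def by measurable

lemma borel_measurable_charpoly_X [measurable]:
  "(\<lambda>\<theta>. charpoly_X N \<theta> z) \<in> borel_measurable (box_space N)"
  unfolding charpoly_X_def by measurable

lemma borel_measurable_charpoly_X_circle [measurable]:
  "(\<lambda>(\<theta>, u). charpoly_X N \<theta> (cis u)) \<in> borel_measurable (box_space N \<Otimes>\<^sub>M circle_space)"
proof -
  have [measurable]: "(\<lambda>p. fst p j) \<in> borel_measurable (box_space N \<Otimes>\<^sub>M circle_space)"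
    if "j \<in> {..<N}" for j
    using measurable_comp[OF measurable_fst measurable_angle[OF that]] by (simp add: comp_def)
  have [measurable]: "snd \<in> borel_measurable (box_space N \<Otimes>\<^sub>M circle_space)"
    using measurable_comp[OF measurable_snd measurable_ident_circle_space] by (simp add: comp_def)
  show ?thesis
    unfolding charpoly_X_def case_prod_beta by measurable
qed

lemma cbe_weight_nonneg: "0 \<le> cbe_weight \<beta> N \<theta>"
  unfolding cbe_weight_def by (intro prod_nonneg) auto

lemma cis_rotate_angles: "j < N \<Longrightarrow> cis (rotate_angles N c \<theta> j) = cis c * cis (\<theta> j)"
  by (simp add: rotate_angles_def cis_rotate_angle cis_mult add.commute)

lemma charpoly_X_rotate_angles:
  "charpoly_X N (rotate_angles N c \<theta>) z = charpoly_X N \<theta> (cis (- c) * z)"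
  unfolding charpoly_X_def
  by (intro prod.cong refl) (simp add: cis_rotate_angles flip: cis_inverse)

lemma cbe_weight_rotate_angles: "cbe_weight \<beta> N (rotate_angles N c \<theta>) = cbe_weight \<beta> N \<theta>"
  unfolding cbe_weight_def
  by (intro prod.cong refl) (auto simp: cis_rotate_angles norm_mult simp flip: right_diff_distrib)

section \<open>Circle averages of the characteristic polynomial\<close>

lemma interval_integral_eq_circle_space:
  assumes "f \<in> borel_measurable borel" "\<And>t. 0 \<le> f t"
  shows "(LBINT t=-pi..pi. f t) = enn2real (\<integral>\<^sup>+t. f t \<partial>circle_space)"
proof -
  have "(LBINT t=-pi..pi. f t) = (LBINT t:{-pi..<pi}. f t)"
    by (simp add: interval_integral_Ico)
  also have "\<dots> = integral\<^sup>L circle_space f"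
    by (simp add: circle_space_def integral_restrict_space set_lebesgue_integral_def)
  also have "\<dots> = enn2real (\<integral>\<^sup>+t. f t \<partial>circle_space)"
    using assms by (intro integral_eq_nn_integral)
      (auto intro: measurable_comp[OF measurable_ident_circle_space, unfolded comp_def])
  finally show ?thesis .
qed

lemma borel_measurable_charpoly_X_cis [measurable]:
  "(\<lambda>u. charpoly_X N \<theta> (cis u)) \<in> borel_measurable circle_space"
  by (rule measurable_comp[OF measurable_ident_circle_space, unfolded comp_def])
    (simp add: charpoly_X_def)

definition charpoly_mean :: "nat \<Rightarrow> real \<Rightarrow> (nat \<Rightarrow> real) \<Rightarrow> real" where
  "charpoly_mean N s \<theta> = 1 / (2 * pi) * (LBINT t=-pi..pi. cmod (charpoly_X N \<theta> (cis t)) powr (2 * s))"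

lemma charpoly_mean_eq_nn_integral:
  "charpoly_mean N s \<theta> =
    enn2real (\<integral>\<^sup>+u. cmod (charpoly_X N \<theta> (cis u)) powr (2 * s) \<partial>circle_space) / (2 * pi)"
  unfolding charpoly_mean_def
  by (subst interval_integral_eq_circle_space) (auto simp: charpoly_X_def)

lemma charpoly_mean_nonneg: "0 \<le> charpoly_mean N s \<theta>"
  by (simp add: charpoly_mean_eq_nn_integral)

lemma borel_measurable_charpoly_mean [measurable]:
  "charpoly_mean N s \<in> borel_measurable (box_space N)"
proof -
  have "(\<lambda>\<theta>. \<integral>\<^sup>+u. cmod (charpoly_X N \<theta> (cis u)) powr (2 * s) \<partial>circle_space)
      \<in> borel_measurable (box_space N)"
    by (rule circle_space.borel_measurable_nn_integral) measurable
  then show ?thesis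
    unfolding charpoly_mean_eq_nn_integral[abs_def] by measurable
qed

lemma charpoly_mean_rotate_angles: "charpoly_mean N s (rotate_angles N c \<theta>) = charpoly_mean N s \<theta>"
proof -
  have "(\<lambda>u. ennreal (cmod (charpoly_X N \<theta> (cis u)) powr (2 * s))) \<in> borel_measurable circle_space"
    by measurable
  from nn_integral_circle_rotate_angle[OF this, of "- c"] show ?thesis
    by (simp add: charpoly_mean_eq_nn_integral charpoly_X_rotate_angles cis_rotate_angle
        cis_mult add.commute)
qed

lemma norm_charpoly_X_le: "cmod (charpoly_X N \<theta> (cis u)) \<le> 2 ^ N"
proof -
  have "cmod (1 - cis u * cis (- \<theta> j)) \<le> 2" for j
    using norm_triangle_ineq4[of 1 "cis u * cis (- \<theta> j)"] by (simp add: norm_mult)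
  then show ?thesis
    unfolding charpoly_X_def prod_norm[symmetric]
    by (metis (no_types, lifting) card_lessThan norm_ge_zero prod_constant prod_mono)
qed

lemma ennreal_charpoly_mean:
  assumes "0 \<le> s"
  shows "ennreal (charpoly_mean N s \<theta>) =
    (\<integral>\<^sup>+u. cmod (charpoly_X N \<theta> (cis u)) powr (2 * s) \<partial>circle_space) / ennreal (2 * pi)"
proof -
  have "(\<integral>\<^sup>+u. cmod (charpoly_X N \<theta> (cis u)) powr (2 * s) \<partial>circle_space) \<le>
      (\<integral>\<^sup>+u. (2 ^ N) powr (2 * s) \<partial>circle_space)"
    using assms by (intro nn_integral_mono ennreal_leI powr_mono2 norm_charpoly_X_le) auto
  also have "\<dots> < \<infinity>"
    by (simp add: emeasure_circle_space ennreal_mult_less_top)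
  finally have "(\<integral>\<^sup>+u. cmod (charpoly_X N \<theta> (cis u)) powr (2 * s) \<partial>circle_space) < \<infinity>" .
  then show ?thesis
    unfolding charpoly_mean_eq_nn_integral
    by (subst divide_ennreal[symmetric]) auto
qed

lemma pair_sigma_finite_box_circle: "pair_sigma_finite (box_space N) circle_space"
  unfolding pair_sigma_finite_def box_space_eq_PiM_circle
  using circle_product.sigma_finite circle_space.sigma_finite_measure_axioms by simp

lemma nn_integral_rotation_average:
  fixes G :: "(nat \<Rightarrow> real) \<Rightarrow> real \<Rightarrow> ennreal"
  assumes G: "case_prod G \<in> borel_measurable (box_space N \<Otimes>\<^sub>M circle_space)"
    and rotate: "\<And>\<theta> u. -pi \<le> u \<Longrightarrow> u < pi \<Longrightarrow> G (rotate_angles N u \<theta>) u = H \<theta>"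
  shows "(\<integral>\<^sup>+\<theta>. (\<integral>\<^sup>+u. G \<theta> u \<partial>circle_space) \<partial>box_space N) =
    ennreal (2 * pi) * (\<integral>\<^sup>+\<theta>. H \<theta> \<partial>box_space N)"
proof -
  have "(\<integral>\<^sup>+\<theta>. (\<integral>\<^sup>+u. G \<theta> u \<partial>circle_space) \<partial>box_space N) =
      (\<integral>\<^sup>+u. (\<integral>\<^sup>+\<theta>. G \<theta> u \<partial>box_space N) \<partial>circle_space)"
    by (rule pair_sigma_finite.Fubini'[OF pair_sigma_finite_box_circle G, symmetric])
  also have "\<dots> = (\<integral>\<^sup>+u. (\<integral>\<^sup>+\<theta>. H \<theta> \<partial>box_space N) \<partial>circle_space)"
  proof (rule nn_integral_cong)
    fix u assume u: "u \<in> space circle_space"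
    have "(\<lambda>\<theta>. G \<theta> u) \<in> borel_measurable (box_space N)"
      using measurable_comp[OF measurable_Pair2'[OF u] G] by (simp add: comp_def)
    then have "(\<integral>\<^sup>+\<theta>. G \<theta> u \<partial>box_space N) = (\<integral>\<^sup>+\<theta>. G (rotate_angles N u \<theta>) u \<partial>box_space N)"
      by (rule nn_integral_box_rotate_angles[symmetric])
    also have "\<dots> = (\<integral>\<^sup>+\<theta>. H \<theta> \<partial>box_space N)"
      using u by (simp add: rotate)
    finally show "(\<integral>\<^sup>+\<theta>. G \<theta> u \<partial>box_space N) = (\<integral>\<^sup>+\<theta>. H \<theta> \<partial>box_space N)" .
  qed
  also have "\<dots> = ennreal (2 * pi) * (\<integral>\<^sup>+\<theta>. H \<theta> \<partial>box_space N)"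
    by (simp add: emeasure_circle_space mult.commute)
  finally show ?thesis .
qed

lemma nn_integral_charpoly_mean_times_invariant:
  assumes "0 \<le> s" and [measurable]: "F \<in> borel_measurable (box_space N)"
    and invariant: "\<And>c \<theta>. F (rotate_angles N c \<theta>) = F \<theta>"
  shows "(\<integral>\<^sup>+\<theta>. ennreal (charpoly_mean N s \<theta>) * F \<theta> \<partial>box_space N) =
    (\<integral>\<^sup>+\<theta>. ennreal (cmod (charpoly_X N \<theta> 1) powr (2 * s)) * F \<theta> \<partial>box_space N)"
proof -
  let ?G = "\<lambda>\<theta> u. ennreal (cmod (charpoly_X N \<theta> (cis u)) powr (2 * s)) * F \<theta>"
  have G_measurable [measurable]:
    "case_prod ?G \<in> borel_measurable (box_space N \<Otimes>\<^sub>M circle_space)"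
    unfolding case_prod_beta by measurable
  have "ennreal (charpoly_mean N s \<theta>) * F \<theta> = (\<integral>\<^sup>+u. ?G \<theta> u \<partial>circle_space) / ennreal (2 * pi)"
    for \<theta>
    by (simp add: ennreal_charpoly_mean[OF assms(1)] ennreal_divide_times ennreal_times_divide
        nn_integral_multc)
  then have "(\<integral>\<^sup>+\<theta>. ennreal (charpoly_mean N s \<theta>) * F \<theta> \<partial>box_space N) =
      (\<integral>\<^sup>+\<theta>. (\<integral>\<^sup>+u. ?G \<theta> u \<partial>circle_space) / ennreal (2 * pi) \<partial>box_space N)"
    by simp
  also have "\<dots> = (\<integral>\<^sup>+\<theta>. (\<integral>\<^sup>+u. ?G \<theta> u \<partial>circle_space) \<partial>box_space N) / ennreal (2 * pi)"
    by (rule nn_integral_divide) (rule circle_space.borel_measurable_nn_integral, measurable)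
  also have "\<dots> = ennreal (2 * pi) *
      (\<integral>\<^sup>+\<theta>. ennreal (cmod (charpoly_X N \<theta> 1) powr (2 * s)) * F \<theta> \<partial>box_space N) / ennreal (2 * pi)"
    by (subst nn_integral_rotation_average[OF G_measurable])
      (simp_all add: charpoly_X_rotate_angles invariant cis_mult)
  also have "\<dots> = (\<integral>\<^sup>+\<theta>. ennreal (cmod (charpoly_X N \<theta> 1) powr (2 * s)) * F \<theta> \<partial>box_space N)"
    by (subst mult.commute) (simp add: mult_divide_eq_ennreal)
  finally show ?thesis .
qed

section \<open>Factorisation through the normalised polynomial\<close>

lemma norm_charpoly_X: "cmod (charpoly_X N \<theta> z) = (\<Prod>j<N. cmod (z - cis (\<theta> j)))"
proof -
  have "cmod (1 - z * cis (- a)) = cmod (z - cis a)" for a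
  proof -
    have "1 - z * cis (- a) = cis (- a) * (cis a - z)"
      by (simp add: right_diff_distrib cis_mult)
    then show ?thesis by (simp add: norm_mult norm_minus_commute)
  qed
  then show ?thesis
    unfolding charpoly_X_def by (simp add: prod_norm[symmetric])
qed

lemma norm_charpoly_X_eq_norm_q_poly:
  assumes "charpoly_X N \<theta> 1 \<noteq> 0"
  shows "cmod (charpoly_X N \<theta> z) = cmod (charpoly_X N \<theta> 1) * cmod (q_poly N \<theta> z)"
proof -
  have "(\<Prod>j<N. cmod (1 - cis (\<theta> j))) \<noteq> 0"
    using assms by (simp flip: norm_charpoly_X)
  then have nonzero: "cmod (1 - cis (\<theta> j)) \<noteq> 0" if "j < N" for j
    using that by auto
  have "cmod (q_poly N \<theta> z) = (\<Prod>j<N. cmod (z - cis (\<theta> j)) / cmod (1 - cis (\<theta> j)))"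
    by (simp add: q_poly_def prod_norm[symmetric] norm_divide)
  then have "cmod (charpoly_X N \<theta> 1) * cmod (q_poly N \<theta> z) =
      (\<Prod>j<N. cmod (1 - cis (\<theta> j)) * (cmod (z - cis (\<theta> j)) / cmod (1 - cis (\<theta> j))))"
    by (simp only: norm_charpoly_X prod.distrib)
  also have "\<dots> = cmod (charpoly_X N \<theta> z)"
    unfolding norm_charpoly_X using nonzero by (intro prod.cong) auto
  finally show ?thesis ..
qed

lemma cj_weight_eq_cbe_weight:
  "cj_weight \<beta> \<delta> N \<theta> = cbe_weight \<beta> N \<theta> * cmod (charpoly_X N \<theta> 1) powr (2 * \<delta>)"
  unfolding cj_weight_def norm_charpoly_X by (simp add: prod_powr_distrib)

definition q_poly_mean :: "nat \<Rightarrow> real \<Rightarrow> (nat \<Rightarrow> real) \<Rightarrow> real" where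
  "q_poly_mean N s \<theta> = 1 / (2 * pi) * (LBINT t=-pi..pi. cmod (q_poly N \<theta> (cis t)) powr (2 * s))"

lemma charpoly_mean_eq_q_poly_mean:
  assumes "charpoly_X N \<theta> 1 \<noteq> 0"
  shows "charpoly_mean N s \<theta> = cmod (charpoly_X N \<theta> 1) powr (2 * s) * q_poly_mean N s \<theta>"
proof -
  have "cmod (charpoly_X N \<theta> (cis t)) powr (2 * s) =
      cmod (charpoly_X N \<theta> 1) powr (2 * s) * cmod (q_poly N \<theta> (cis t)) powr (2 * s)" for t
    using norm_charpoly_X_eq_norm_q_poly[OF assms, of "cis t"] by (simp add: powr_mult)
  then show ?thesis
    by (simp add: charpoly_mean_def q_poly_mean_def)
qed

lemma powr_mult_rescaled_powr_minus_one:
  fixes x y z a k :: real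
  assumes "0 \<le> x" and "0 < x \<Longrightarrow> y = x powr a * z"
  shows "x powr a * y powr (k - 1) = x powr (a * k) * z powr (k - 1)"
proof (cases "x = 0")
  case False
  then have "y powr (k - 1) = x powr (a * (k - 1)) * z powr (k - 1)"
    using assms by (simp add: powr_mult powr_powr)
  then show ?thesis
    by (simp add: powr_add[symmetric] algebra_simps)
qed simp

lemma nn_integral_charpoly_mean_powr:
  assumes "0 \<le> s"
  shows "(\<integral>\<^sup>+\<theta>. ennreal (charpoly_mean N s \<theta> powr k) * ennreal (cbe_weight \<beta> N \<theta>) \<partial>box_space N) =
    (\<integral>\<^sup>+\<theta>. ennreal (q_poly_mean N s \<theta> powr (k - 1)) * ennreal (cj_weight \<beta> (k * s) N \<theta>)
      \<partial>box_space N)"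
proof -
  let ?F = "\<lambda>\<theta>. ennreal (charpoly_mean N s \<theta> powr (k - 1) * cbe_weight \<beta> N \<theta>)"
  have "(\<integral>\<^sup>+\<theta>. ennreal (charpoly_mean N s \<theta> powr k) * ennreal (cbe_weight \<beta> N \<theta>) \<partial>box_space N) =
      (\<integral>\<^sup>+\<theta>. ennreal (charpoly_mean N s \<theta>) * ?F \<theta> \<partial>box_space N)"
    using powr_mult_base[OF charpoly_mean_nonneg, of N s _ "k - 1"]
    by (simp add: ennreal_mult'[symmetric] charpoly_mean_nonneg cbe_weight_nonneg flip: mult.assoc)
  also have "\<dots> = (\<integral>\<^sup>+\<theta>. ennreal (cmod (charpoly_X N \<theta> 1) powr (2 * s)) * ?F \<theta> \<partial>box_space N)"
    using assms
    by (intro nn_integral_charpoly_mean_times_invariant)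
      (simp_all add: charpoly_mean_rotate_angles cbe_weight_rotate_angles)
  also have "\<dots> = (\<integral>\<^sup>+\<theta>. ennreal (q_poly_mean N s \<theta> powr (k - 1)) *
      ennreal (cj_weight \<beta> (k * s) N \<theta>) \<partial>box_space N)"
  proof (intro nn_integral_cong)
    fix \<theta>
    have "cmod (charpoly_X N \<theta> 1) powr (2 * s) * charpoly_mean N s \<theta> powr (k - 1) =
        cmod (charpoly_X N \<theta> 1) powr (2 * s * k) * q_poly_mean N s \<theta> powr (k - 1)"
      \<comment> \<open>Where X_N(1) = 0, q_N divides by zero; both sides then vanish since 0 powr a = 0.\<close>
      by (rule powr_mult_rescaled_powr_minus_one) (simp_all add: charpoly_mean_eq_q_poly_mean)
    then show "ennreal (cmod (charpoly_X N \<theta> 1) powr (2 * s)) * ?F \<theta> =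
        ennreal (q_poly_mean N s \<theta> powr (k - 1)) * ennreal (cj_weight \<beta> (k * s) N \<theta>)"
      by (simp add: cj_weight_eq_cbe_weight ennreal_mult'[symmetric] cbe_weight_nonneg ac_simps)
  qed
  finally show ?thesis .
qed

lemma cj_weight_le:
  assumes "0 \<le> \<beta>" "0 \<le> \<delta>"
  shows "cj_weight \<beta> \<delta> N \<theta> \<le> (2 powr \<beta>) ^ card {(j, k). j < k \<and> k < N} * (2 powr (2 * \<delta>)) ^ N"
proof -
  have norm_diff_le: "cmod (cis a - cis b) \<le> 2" for a b
    using norm_triangle_ineq4[of "cis a" "cis b"] by simp
  have "cbe_weight \<beta> N \<theta> \<le> (\<Prod>p\<in>{(j, k). j < k \<and> k < N}. 2 powr \<beta>)"
    unfolding cbe_weight_def using assms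
    by (intro prod_mono conjI powr_mono2 norm_diff_le) auto
  moreover have "(\<Prod>j<N. cmod (1 - cis (\<theta> j)) powr (2 * \<delta>)) \<le> (\<Prod>j<N. 2 powr (2 * \<delta>))"
    using assms norm_diff_le[of 0] by (intro prod_mono conjI powr_mono2) auto
  ultimately show ?thesis
    unfolding cj_weight_def by (intro mult_mono) (auto intro!: prod_nonneg simp: cbe_weight_nonneg)
qed

lemma emeasure_box_space: "emeasure (box_space N) (space (box_space N)) = ennreal (2 * pi) ^ N"
  unfolding box_space_eq_PiM_circle space_PiM
  by (subst circle_product.emeasure_PiM) (auto simp: emeasure_circle_space sets_circle_space)

lemma nn_integral_cj_weight_finite:
  assumes "0 \<le> \<beta>" "0 \<le> \<delta>"
  shows "(\<integral>\<^sup>+\<theta>. cj_weight \<beta> \<delta> N \<theta> \<partial>box_space N) < \<infinity>"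
proof -
  let ?C = "(2 powr \<beta>) ^ card {(j, k). j < k \<and> k < N} * (2 powr (2 * \<delta>)) ^ N"
  have "(\<integral>\<^sup>+\<theta>. cj_weight \<beta> \<delta> N \<theta> \<partial>box_space N) \<le> (\<integral>\<^sup>+\<theta>. ?C \<partial>box_space N)"
    using assms by (intro nn_integral_mono ennreal_leI cj_weight_le)
  also have "\<dots> = ennreal ?C * ennreal (2 * pi) ^ N"
    by (simp add: emeasure_box_space)
  also have "\<dots> < \<infinity>"
    by (simp add: ennreal_mult_less_top power_less_top_ennreal)
  finally show ?thesis .
qed

lemma nn_integral_mult_null_weight:
  fixes w :: "'a \<Rightarrow> ennreal"
  assumes "w \<in> borel_measurable M" "(\<integral>\<^sup>+x. w x \<partial>M) = 0"
  shows "(\<integral>\<^sup>+x. f x * w x \<partial>M) = 0"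
proof -
  have "AE x in M. w x = 0"
    using assms by (simp add: nn_integral_0_iff_AE)
  then have "(\<integral>\<^sup>+x. f x * w x \<partial>M) = (\<integral>\<^sup>+x. 0 \<partial>M)"
    by (intro nn_integral_cong_AE) auto
  then show ?thesis by simp
qed

lemma ennreal_divide_eq_divide_mult_divide:
  fixes a b c :: ennreal
  assumes "c < \<infinity>" "c = 0 \<Longrightarrow> a = 0"
  shows "a / b = c / b * (a / c)"
proof (cases "c = 0")
  case False
  then have "c / b * (a / c) = a / b * (c / c)"
    by (simp add: divide_ennreal_def ac_simps)
  with False assms(1) show ?thesis by simp
qed (use assms in simp)

theorem proposition2p3:
  fixes \<beta> k s :: real and N :: nat
  assumes "\<beta> > 0" and "k \<ge> 0" and "s \<ge> 0"
  shows "moments_M \<beta> N k s =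
    ens_expect N (cbe_weight \<beta> N) (\<lambda>\<theta>. cmod (charpoly_X N \<theta> 1) powr (2 * k * s)) *
    ens_expect N (cj_weight \<beta> (k * s) N)
      (\<lambda>\<theta>. (1 / (2 * pi) * (LBINT t=-pi..pi. cmod (q_poly N \<theta> (cis t)) powr (2 * s))) powr (k - 1))"
proof -
  let ?Z = "\<integral>\<^sup>+\<theta>. cbe_weight \<beta> N \<theta> \<partial>box_space N"
  let ?Z' = "\<integral>\<^sup>+\<theta>. cj_weight \<beta> (k * s) N \<theta> \<partial>box_space N"
  let ?R = "\<integral>\<^sup>+\<theta>. ennreal (q_poly_mean N s \<theta> powr (k - 1)) * ennreal (cj_weight \<beta> (k * s) N \<theta>)
    \<partial>box_space N"
  have moments: "moments_M \<beta> N k s = ?R / ?Z"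
    unfolding moments_M_def ens_expect_def charpoly_mean_def[symmetric]
    by (simp add: nn_integral_charpoly_mean_powr[OF assms(3)])
  have first_factor:
    "ens_expect N (cbe_weight \<beta> N) (\<lambda>\<theta>. cmod (charpoly_X N \<theta> 1) powr (2 * k * s)) = ?Z' / ?Z"
    by (simp add: ens_expect_def cj_weight_eq_cbe_weight ennreal_mult'[symmetric] cbe_weight_nonneg
        ac_simps)
  have second_factor: "ens_expect N (cj_weight \<beta> (k * s) N)
      (\<lambda>\<theta>. (1 / (2 * pi) * (LBINT t=-pi..pi. cmod (q_poly N \<theta> (cis t)) powr (2 * s))) powr (k - 1)) =
    ?R / ?Z'"
    by (simp add: ens_expect_def q_poly_mean_def)
  have "?Z' < \<infinity>"
    using assms by (intro nn_integral_cj_weight_finite) auto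
  moreover have "?Z' = 0 \<Longrightarrow> ?R = 0"
    by (rule nn_integral_mult_null_weight) simp
  ultimately show ?thesis
    unfolding moments first_factor second_factor
    by (rule ennreal_divide_eq_divide_mult_divide)
qed

end
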